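(* Assume (A1), (A2) and (A4) below, and let $\varepsilon_\diamond$ be as below. Let $A\subseteq\operatorname{cl}\mathbb{B}_R^N$ be finite, and set $\tilde A_\varepsilon=A\cap\mathbb{A}_\varepsilon$ and $\tilde A_{\omega,n}=A\cap A_{\omega,n}$. Then for every $0<\varepsilon\le\varepsilon_\diamond$ and $n\in\mathbb{N}_+$, $$\mathbb{P}\Big(\big\{\omega : \tilde A_{-\varepsilon}\subseteq\tilde A_{\omega,n}\subseteq\tilde A_{\varepsilon}\big\}^c\Big)\le 2N|A|\exp\Big(-\frac{\varepsilon^2 n}{3M_h^2}\Big).$$
   Context: Setting. $(\Omega,\mathcal{F},\mathbb{P})$ is a probability space; $N,d\in\mathbb{N}_+$, $R>0$, $\lambda>0$. $\mathcal{X}\subseteq\mathbb{R}^{n_x}$, $\mathcal{Y}\subseteq\mathbb{R}^{n_y}$ are compact; $X:\Omega\to\mathcal{X}$, $Y:\Omega\to\mathcal{Y}$ are random variables. $\phi_1,\dots,\phi_d$ are continuous on $\mathcal{X}$, $\Phi^d(x)=[\phi_l(x)]_{l=1}^d$. $\mathbb{B}_R=\{a\in\mathbb{R}^d:\|a\|_2<R\}$, $\operatorname{cl}\mathbb{B}_R$ its closure, $\operatorname{cl}\mathbb{B}_R^N=\prod_{i=1}^N\operatorname{cl}\mathbb{B}_R\subseteq\mathbb{R}^{Nd}$. A profile $\mathbf{a}=[a^1;\dots;a^N]$, $a^i\in\mathbb{R}^d$, defines $\hat z^i(x)=\sum_l a^i_l\phi_l(x)$ and $\hat z^{-i}(x)$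 (stack over $j\neq i$). $\hat{\mathcal{Z}}^i=\bigcup\{\hat z^i(\mathcal{X}):a^i\in\operatorname{cl}\mathbb{B}_R\}$, $\hat{\mathcal{Z}}=\prod_i\hat{\mathcal{Z}}^i$. Player $i$ has objective $J^i(z^i;y,z^{-i})$ (derivative $\partial J^i$ in $z^i$) and constraint $h^i:\hat{\mathcal{Z}}^i\times\mathcal{Y}\to\mathbb{R}$. $F(z;y)=[\partial J^i(z^i;y,z^{-i})]_i$; $\mathbf{F}(\mathbf{a};x,y)=[\partial J^i(\hat z^i(x);y,\hat z^{-i}(x))\Phi^d(x)]_i$; $\mathbb{F}^0(\mathbf{a})=\mathbb{E}[\mathbf{F}(\mathbf{a};X,Y)]$; $\mathbf{h}^i(a^i;x,y)=h^i(\hat z^i(x);y)$; $\bar h^i(a^i)=\mathbb{E}[\mathbf{h}^i(a^i;X,Y)]$. $(X^k,Y^k)_{k\ge1}$ are i.i.d. copies of $(X,Y)$ on $\Omega$; $\mathbf{h}^i_{\omega,n}(a^i)=\frac1n\sum_{k=1}^n\mathbf{h}^i(a^i;X^k(\omega),Y^k(\omega))$. For $\varepsilon\in\mathbb{R}$: $\mathbb{A}^i_\varepsilon=\{a^i\in\operatorname{cl}\mathbb{B}_R:\bar h^i(a^i)\le\varepsilon\}$, $\mathbb{A}_\varepsilon=\prod_i\mathbb{A}^i_\varepsilon$; $A^i_{\omega,n}=\{a^i\in\operatorname{cl}\mathbb{B}_R:\mathbf{h}^i_{\omega,n}(a^i)\le0\}$, $A_{\omega,n}=\prod_iA^i_{\omega,n}$.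 (A1) Each $J^i(\cdot;y,z^{-i})$ is continuously differentiable. (A2) For all $y$, $F(\cdot;y)$ is $L_F$-Lipschitz on $\hat{\mathcal{Z}}$ and each $h^i(\cdot;y)$ is $L_h$-Lipschitz on $\hat{\mathcal{Z}}^i$; some $z\in\hat{\mathcal{Z}}$ has $F(z;\mathcal{Y})$ and all $h^i(z^i;\mathcal{Y})$ bounded. Fix $M_h$ with $\sup_{z\in\hat{\mathcal{Z}},y\in\mathcal{Y}}\max_i|h^i(z^i;y)|<M_h$. (A4) There is $\varepsilon_h>0$ such that for every $i$, $\{a^i\in\operatorname{cl}\mathbb{B}_R:\bar h^i(a^i)\le-\varepsilon_h\}\ne\varnothing$. The constant $\varepsilon_\diamond\in(0,\varepsilon_h)$: for every $\mathbf{a}\in\operatorname{cl}\mathbb{B}_R^N$, each centered random variable $W$ of the form $[\mathbf{F}(\mathbf{a};X,Y)]_l-[\mathbb{F}^0(\mathbf{a})]_l$ or $\mathbf{h}^i(a^i;X,Y)-\bar h^i(a^i)$, with variance $\sigma^2$, has rate function $I(u)=\sup_t\{tu-\log\mathbb{E}[e^{tW}]\}$ satisfying $I(u)\ge u^2/(3\sigma^2)$ for $0<u\le\varepsilon_\diamond$. *)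

theory Defs
  imports "HOL-Probability.Probability"
begin

text \<open>Vectors in R^d are represented as extensional functions nat => real
  (entries at indices >= d are 0); profiles a = [a^1;...;a^N] are functions
  nat => nat => real with a i l = a^i_l (players i < N, components l < d).\<close>

definition ballR :: "nat \<Rightarrow> real \<Rightarrow> (nat \<Rightarrow> real) set" where
  "ballR d R = {c. L2_set c {..<d} \<le> R \<and> (\<forall>l\<ge>d. c l = 0)}"

definition ballRN :: "nat \<Rightarrow> nat \<Rightarrow> real \<Rightarrow> (nat \<Rightarrow> nat \<Rightarrow> real) set" where
  "ballRN N d R = {a. (\<forall>i<N. a i \<in> ballR d R) \<and> (\<forall>i\<ge>N. a i = (\<lambda>_. 0))}"

definition zhat :: "nat \<Rightarrow> (nat \<Rightarrow> 'x \<Rightarrow> real) \<Rightarrow> (nat \<Rightarrow> real) \<Rightarrow> 'x \<Rightarrow> real" where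
  "zhat d \<phi> c x = (\<Sum>l<d. c l * \<phi> l x)"

definition zhatN :: "nat \<Rightarrow> nat \<Rightarrow> (nat \<Rightarrow> 'x \<Rightarrow> real) \<Rightarrow> (nat \<Rightarrow> nat \<Rightarrow> real) \<Rightarrow> 'x \<Rightarrow> (nat \<Rightarrow> real)" where
  "zhatN N d \<phi> a x = (\<lambda>i. if i < N then zhat d \<phi> (a i) x else 0)"

definition Zhat_i :: "nat \<Rightarrow> real \<Rightarrow> (nat \<Rightarrow> 'x \<Rightarrow> real) \<Rightarrow> 'x set \<Rightarrow> real set" where
  "Zhat_i d R \<phi> Xs = {zhat d \<phi> c x | c x. c \<in> ballR d R \<and> x \<in> Xs}"

definition ZhatN :: "nat \<Rightarrow> nat \<Rightarrow> real \<Rightarrow> (nat \<Rightarrow> 'x \<Rightarrow> real) \<Rightarrow> 'x set \<Rightarrow> (nat \<Rightarrow> real) set" where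
  "ZhatN N d R \<phi> Xs = {z. (\<forall>i<N. z i \<in> Zhat_i d R \<phi> Xs) \<and> (\<forall>i\<ge>N. z i = 0)}"

definition hbar :: "'w measure \<Rightarrow> ('w \<Rightarrow> 'x) \<Rightarrow> ('w \<Rightarrow> 'y) \<Rightarrow> nat \<Rightarrow> (nat \<Rightarrow> 'x \<Rightarrow> real)
    \<Rightarrow> (nat \<Rightarrow> real \<Rightarrow> 'y \<Rightarrow> real) \<Rightarrow> nat \<Rightarrow> (nat \<Rightarrow> real) \<Rightarrow> real" where
  "hbar M X Y d \<phi> h i c = (\<integral>\<omega>. h i (zhat d \<phi> c (X \<omega>)) (Y \<omega>) \<partial>M)"

definition hemp :: "(nat \<Rightarrow> 'w \<Rightarrow> 'x) \<Rightarrow> (nat \<Rightarrow> 'w \<Rightarrow> 'y) \<Rightarrow> nat \<Rightarrow> (nat \<Rightarrow> 'x \<Rightarrow> real)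
    \<Rightarrow> (nat \<Rightarrow> real \<Rightarrow> 'y \<Rightarrow> real) \<Rightarrow> nat \<Rightarrow> 'w \<Rightarrow> nat \<Rightarrow> (nat \<Rightarrow> real) \<Rightarrow> real" where
  "hemp Xk Yk d \<phi> h n \<omega> i c = (\<Sum>k\<in>{1..n}. h i (zhat d \<phi> c (Xk k \<omega>)) (Yk k \<omega>)) / real n"

definition AAeps :: "'w measure \<Rightarrow> ('w \<Rightarrow> 'x) \<Rightarrow> ('w \<Rightarrow> 'y) \<Rightarrow> nat \<Rightarrow> nat \<Rightarrow> real
    \<Rightarrow> (nat \<Rightarrow> 'x \<Rightarrow> real) \<Rightarrow> (nat \<Rightarrow> real \<Rightarrow> 'y \<Rightarrow> real) \<Rightarrow> real \<Rightarrow> (nat \<Rightarrow> nat \<Rightarrow> real) set" where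
  "AAeps M X Y N d R \<phi> h e = {a \<in> ballRN N d R. \<forall>i<N. hbar M X Y d \<phi> h i (a i) \<le> e}"

definition Aomega :: "(nat \<Rightarrow> 'w \<Rightarrow> 'x) \<Rightarrow> (nat \<Rightarrow> 'w \<Rightarrow> 'y) \<Rightarrow> nat \<Rightarrow> nat \<Rightarrow> real
    \<Rightarrow> (nat \<Rightarrow> 'x \<Rightarrow> real) \<Rightarrow> (nat \<Rightarrow> real \<Rightarrow> 'y \<Rightarrow> real) \<Rightarrow> nat \<Rightarrow> 'w \<Rightarrow> (nat \<Rightarrow> nat \<Rightarrow> real) set" where
  "Aomega Xk Yk N d R \<phi> h n \<omega> = {a \<in> ballRN N d R. \<forall>i<N. hemp Xk Yk d \<phi> h n \<omega> i (a i) \<le> 0}"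

definition var_rv :: "'w measure \<Rightarrow> ('w \<Rightarrow> real) \<Rightarrow> real" where
  "var_rv M W = (\<integral>\<omega>. (W \<omega> - (\<integral>\<omega>'. W \<omega>' \<partial>M))\<^sup>2 \<partial>M)"

definition rate_fun :: "'w measure \<Rightarrow> ('w \<Rightarrow> real) \<Rightarrow> real \<Rightarrow> ereal" where
  "rate_fun M W u = (SUP t. ereal (t * u - ln (\<integral>\<omega>. exp (t * W \<omega>) \<partial>M)))"

definition rate_cond :: "'w measure \<Rightarrow> real \<Rightarrow> ('w \<Rightarrow> real) \<Rightarrow> bool" where
  "rate_cond M e W = (\<forall>u. 0 < u \<and> u \<le> e \<longrightarrow> ereal (u\<^sup>2 / (3 * var_rv M W)) \<le> rate_fun M W u)"

end

theory Submission
  imports Defs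
begin

text \<open>For a profile \<open>a \<in> A\<close> and a player \<open>i\<close>, the empirical constraint value is the mean of \<open>n\<close>
  i.i.d. copies of \<open>h\<^sup>i(zhat\<^sup>i(X); Y) \<in> [-M\<^sub>h, M\<^sub>h]\<close>, so by Hoeffding's inequality it deviates from
  \<open>bar h\<^sup>i(a\<^sup>i)\<close> by at least \<open>\<epsilon>\<close> with probability at most \<open>2 exp(-\<epsilon>\<^sup>2 n / (2 M\<^sub>h\<^sup>2))\<close>. This already
  beats the exponent \<open>\<epsilon>\<^sup>2 n / (3 M\<^sub>h\<^sup>2)\<close>.
  If no deviation reaches \<open>\<epsilon>\<close>, then \<open>bar h\<^sup>i \<le> -\<epsilon>\<close> forces the empirical value below \<open>0\<close> and an
  empirical value \<open>\<le> 0\<close> forces \<open>bar h\<^sup>i < \<epsilon>\<close>, which is the sandwich; a union bound over the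
  \<open>N |A|\<close> pairs \<open>(a, i)\<close> concludes.\<close>

lemma (in prob_space) indep_identically_distributed_compose:
  assumes indep: "indep_vars (\<lambda>_. borel) Z I"
    and distr: "\<And>k. k \<in> I \<Longrightarrow> distr M borel (Z k) = distr M borel Z\<^sub>0"
    and Z\<^sub>0: "random_variable borel Z\<^sub>0"
    and g: "g \<in> borel_measurable borel"
  shows "indep_vars (\<lambda>_. borel) (\<lambda>k \<omega>. g (Z k \<omega>)) I"
    and "k \<in> I \<Longrightarrow> distr M borel (\<lambda>\<omega>. g (Z k \<omega>)) = distr M borel (\<lambda>\<omega>. g (Z\<^sub>0 \<omega>))"
proof -
  show "indep_vars (\<lambda>_. borel) (\<lambda>k \<omega>. g (Z k \<omega>)) I"
    using indep_vars_compose2[OF indep, of "\<lambda>_. g"] g by simp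
next
  assume k: "k \<in> I"
  have Zk: "random_variable borel (Z k)"
    using indep k unfolding indep_vars_def by blast
  have "distr M borel (\<lambda>\<omega>. g (Z k \<omega>)) = distr (distr M borel (Z k)) borel g"
    using distr_distr[OF g Zk] by (simp add: comp_def)
  also have "\<dots> = distr (distr M borel Z\<^sub>0) borel g"
    using distr[OF k] by simp
  also have "\<dots> = distr M borel (\<lambda>\<omega>. g (Z\<^sub>0 \<omega>))"
    using distr_distr[OF g Z\<^sub>0] by (simp add: comp_def)
  finally show "distr M borel (\<lambda>\<omega>. g (Z k \<omega>)) = distr M borel (\<lambda>\<omega>. g (Z\<^sub>0 \<omega>))" .
qed

lemma (in prob_space) sample_mean_abs_deviation_Hoeffding:
  fixes W :: "nat \<Rightarrow> 'a \<Rightarrow> real"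
  assumes indep: "indep_vars (\<lambda>_. borel) W {1..n}"
    and distr: "\<And>k. k \<in> {1..n} \<Longrightarrow> distr M borel (W k) = distr M borel V"
    and V: "random_variable borel V"
    and bounded: "AE \<omega> in M. \<bar>V \<omega>\<bar> \<le> B"
    and "0 < \<epsilon>" "1 \<le> n"
  shows "prob {\<omega> \<in> space M. \<epsilon> \<le> \<bar>(\<Sum>k\<in>{1..n}. W k \<omega>) / real n - expectation V\<bar>}
           \<le> 2 * exp (- (\<epsilon>\<^sup>2 * real n) / (2 * B\<^sup>2))"
proof (cases "B = 0")
  case True
  \<comment> \<open>the exponent is \<open>x / 0 = 0\<close>, so the bound is the trivial \<open>2\<close>\<close>
  have "prob {\<omega> \<in> space M. \<epsilon> \<le> \<bar>(\<Sum>k\<in>{1..n}. W k \<omega>) / real n - expectation V\<bar>} \<le> 1"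
    by (rule prob_le_1)
  moreover have "2 * exp (- (\<epsilon>\<^sup>2 * real n) / (2 * B\<^sup>2)) = 2"
    using True by simp
  ultimately show ?thesis by linarith
next
  case False
  have "0 \<le> B"
  proof (rule ccontr)
    assume "\<not> 0 \<le> B"
    then have "AE \<omega> in M. \<not> \<bar>V \<omega>\<bar> \<le> B" by (intro AE_I2) auto
    with bounded show False by (rule AE_contr)
  qed
  with False have "0 < B" by simp
  interpret Hoeffding_ineq_iid M "{1..n}" W V "- B" B "expectation V"
  proof unfold_locales
    show "AE \<omega> in M. V \<omega> \<in> {- B..B}"
      using bounded by eventually_elim auto
  qed (use indep distr V in auto)
  have "prob {\<omega> \<in> space M. \<epsilon> \<le> \<bar>(\<Sum>k\<in>{1..n}. W k \<omega>) / real n - expectation V\<bar>}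
          \<le> 2 * exp (-2 * real (card {1..n}) * \<epsilon>\<^sup>2 / (B - - B)\<^sup>2)"
    using Hoeffding_ineq_abs_ge'[of \<epsilon>] \<open>0 < B\<close> assms by simp
  also have "-2 * real (card {1..n}) * \<epsilon>\<^sup>2 / (B - - B)\<^sup>2 = - (\<epsilon>\<^sup>2 * real n) / (2 * B\<^sup>2)"
    using \<open>0 < B\<close> by (simp add: power2_eq_square field_simps)
  finally show ?thesis .
qed

lemma (in prob_space) prob_le_card_mult_of_cover:
  assumes "finite I" and cover: "S \<subseteq> (\<Union>i\<in>I. E i)"
    and E: "\<And>i. i \<in> I \<Longrightarrow> E i \<in> events"
    and p: "\<And>i. i \<in> I \<Longrightarrow> prob (E i) \<le> p"
  shows "prob S \<le> real (card I) * p"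
proof -
  have "prob S \<le> prob (\<Union>i\<in>I. E i)"
    using cover E \<open>finite I\<close> by (intro finite_measure_mono) auto
  also have "\<dots> \<le> (\<Sum>i\<in>I. prob (E i))"
    using E \<open>finite I\<close> by (intro measure_UNION_le) auto
  also have "\<dots> \<le> (\<Sum>i\<in>I. p)"
    using p by (intro sum_mono)
  finally show ?thesis by simp
qed

lemma hemp_measurable:
  assumes XYk: "\<And>k. k \<in> {1..n} \<Longrightarrow> (\<lambda>\<omega>. (Xk k \<omega>, Yk k \<omega>)) \<in> borel_measurable M"
    and g: "(\<lambda>p. h i (zhat d \<phi> c (fst p)) (snd p)) \<in> borel_measurable borel"
  shows "(\<lambda>\<omega>. hemp Xk Yk d \<phi> h n \<omega> i c) \<in> borel_measurable M"
proof -
  have "(\<lambda>\<omega>. h i (zhat d \<phi> c (Xk k \<omega>)) (Yk k \<omega>)) \<in> borel_measurable M" if "k \<in> {1..n}" for k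
    using measurable_comp[OF XYk[OF that] g] by (simp add: comp_def)
  then show ?thesis
    unfolding hemp_def by (intro borel_measurable_divide borel_measurable_sum) auto
qed

lemma (in prob_space) hemp_abs_deviation_Hoeffding:
  assumes indep: "indep_vars (\<lambda>_. borel) (\<lambda>k \<omega>. (Xk k \<omega>, Yk k \<omega>)) {1..}"
    and distr: "\<forall>k\<ge>1. distr M borel (\<lambda>\<omega>. (Xk k \<omega>, Yk k \<omega>)) = distr M borel (\<lambda>\<omega>. (X \<omega>, Y \<omega>))"
    and XY: "(\<lambda>\<omega>. (X \<omega>, Y \<omega>)) \<in> borel_measurable M"
    and g: "(\<lambda>p. h i (zhat d \<phi> c (fst p)) (snd p)) \<in> borel_measurable borel"
    and bounded: "\<forall>\<omega>\<in>space M. \<bar>h i (zhat d \<phi> c (X \<omega>)) (Y \<omega>)\<bar> \<le> B"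
    and \<epsilon>: "0 < \<epsilon>" and n: "1 \<le> n"
  shows "prob {\<omega> \<in> space M. \<epsilon> \<le> \<bar>hemp Xk Yk d \<phi> h n \<omega> i c - hbar M X Y d \<phi> h i c\<bar>}
           \<le> 2 * exp (- (\<epsilon>\<^sup>2 * real n) / (2 * B\<^sup>2))"
proof -
  let ?g = "\<lambda>p. h i (zhat d \<phi> c (fst p)) (snd p)"
  have indep_n: "indep_vars (\<lambda>_. borel) (\<lambda>k \<omega>. (Xk k \<omega>, Yk k \<omega>)) {1..n}"
    using indep_vars_subset[OF indep] by auto
  note iid = indep_identically_distributed_compose[OF indep_n _ XY g]
  show ?thesis
    unfolding hemp_def hbar_def
    using sample_mean_abs_deviation_Hoeffding[where W = "\<lambda>k \<omega>. ?g (Xk k \<omega>, Yk k \<omega>)"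
        and V = "\<lambda>\<omega>. ?g (X \<omega>, Y \<omega>)"] iid distr measurable_comp[OF XY g] bounded \<epsilon> n
    by (simp add: comp_def AE_I2)
qed

lemma h_abs_le_on_ballR:
  assumes bound: "\<forall>z\<in>ZhatN N d R \<phi> Xs. \<forall>y\<in>Ys. \<forall>i<N. \<bar>h i (z i) y\<bar> \<le> C"
    and "c \<in> ballR d R" "x \<in> Xs" "y \<in> Ys" "i < N"
  shows "\<bar>h i (zhat d \<phi> c x) y\<bar> \<le> C"
proof -
  let ?z = "\<lambda>j. if j < N then zhat d \<phi> c x else 0"
  have "?z \<in> ZhatN N d R \<phi> Xs"
    using assms unfolding ZhatN_def Zhat_i_def by auto
  then show ?thesis
    using bound assms by force
qed

lemma AAeps_Aomega_sandwich:
  assumes "a \<in> ballRN N d R"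
    and close: "\<forall>i<N. \<bar>hemp Xk Yk d \<phi> h n \<omega> i (a i) - hbar M X Y d \<phi> h i (a i)\<bar> < \<epsilon>"
  shows "a \<in> AAeps M X Y N d R \<phi> h (- \<epsilon>) \<Longrightarrow> a \<in> Aomega Xk Yk N d R \<phi> h n \<omega>"
    and "a \<in> Aomega Xk Yk N d R \<phi> h n \<omega> \<Longrightarrow> a \<in> AAeps M X Y N d R \<phi> h \<epsilon>"
  using assms unfolding AAeps_def Aomega_def by (force simp: abs_less_iff)+

lemma sandwich_failure_subset_deviations:
  assumes "A \<subseteq> ballRN N d R"
  shows "{\<omega> \<in> space M. \<not> (A \<inter> AAeps M X Y N d R \<phi> h (- \<epsilon>) \<subseteq> A \<inter> Aomega Xk Yk N d R \<phi> h n \<omega>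
                         \<and> A \<inter> Aomega Xk Yk N d R \<phi> h n \<omega> \<subseteq> A \<inter> AAeps M X Y N d R \<phi> h \<epsilon>)}
         \<subseteq> (\<Union>(a, i)\<in>A \<times> {..<N}. {\<omega> \<in> space M.
               \<epsilon> \<le> \<bar>hemp Xk Yk d \<phi> h n \<omega> i (a i) - hbar M X Y d \<phi> h i (a i)\<bar>})"
    (is "?bad \<subseteq> ?deviations")
proof
  fix \<omega> assume "\<omega> \<in> ?bad"
  then obtain a where a: "a \<in> A" "\<omega> \<in> space M"
    and "\<not> ((a \<in> AAeps M X Y N d R \<phi> h (- \<epsilon>) \<longrightarrow> a \<in> Aomega Xk Yk N d R \<phi> h n \<omega>)
             \<and> (a \<in> Aomega Xk Yk N d R \<phi> h n \<omega> \<longrightarrow> a \<in> AAeps M X Y N d R \<phi> h \<epsilon>))"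
    by blast
  then obtain i where "i < N" "\<epsilon> \<le> \<bar>hemp Xk Yk d \<phi> h n \<omega> i (a i) - hbar M X Y d \<phi> h i (a i)\<bar>"
    using AAeps_Aomega_sandwich assms by (meson not_less subsetD)
  then show "\<omega> \<in> ?deviations"
    using a by force
qed

lemma sets_sandwich_failure:
  assumes "finite A" "A \<subseteq> ballRN N d R"
    and hemp_meas: "\<And>i c. i < N \<Longrightarrow> c \<in> ballR d R \<Longrightarrow> (\<lambda>\<omega>. hemp Xk Yk d \<phi> h n \<omega> i c) \<in> borel_measurable M"
  shows "{\<omega> \<in> space M. \<not> (A \<inter> AAeps M X Y N d R \<phi> h (- \<epsilon>) \<subseteq> A \<inter> Aomega Xk Yk N d R \<phi> h n \<omega>
                         \<and> A \<inter> Aomega Xk Yk N d R \<phi> h n \<omega> \<subseteq> A \<inter> AAeps M X Y N d R \<phi> h \<epsilon>)} \<in> sets M"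
    (is "?bad \<in> sets M")
proof -
  have Aomega_event: "{\<omega> \<in> space M. a \<in> Aomega Xk Yk N d R \<phi> h n \<omega>} \<in> sets M" if "a \<in> A" for a
  proof -
    have a: "a \<in> ballRN N d R" using that assms(2) by blast
    then have "{\<omega> \<in> space M. a \<in> Aomega Xk Yk N d R \<phi> h n \<omega>}
            = {\<omega> \<in> space M. \<forall>i\<in>{..<N}. hemp Xk Yk d \<phi> h n \<omega> i (a i) \<le> 0}"
      unfolding Aomega_def by auto
    also have "\<dots> \<in> sets M"
      using a hemp_meas unfolding ballRN_def
      by (intro sets.sets_Collect_finite_All borel_measurable_le borel_measurable_const) auto
    finally show ?thesis .
  qed
  have "?bad = {\<omega> \<in> space M. \<exists>a\<in>A.
          \<not> ((a \<in> AAeps M X Y N d R \<phi> h (- \<epsilon>) \<longrightarrow> a \<in> Aomega Xk Yk N d R \<phi> h n \<omega>)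
              \<and> (a \<in> Aomega Xk Yk N d R \<phi> h n \<omega> \<longrightarrow> a \<in> AAeps M X Y N d R \<phi> h \<epsilon>))}"
    by blast
  also have "\<dots> \<in> sets M"
    by (intro sets.sets_Collect_finite_Ex \<open>finite A\<close> ballI sets.sets_Collect_neg sets.sets_Collect_conj
        sets.sets_Collect_imp sets.sets_Collect_const Aomega_event)
  finally show ?thesis .
qed

lemma (in prob_space) prob_sandwich_failure_le:
  assumes "finite A" and A: "A \<subseteq> ballRN N d R"
    and hemp_meas: "\<And>i c. i < N \<Longrightarrow> c \<in> ballR d R \<Longrightarrow> (\<lambda>\<omega>. hemp Xk Yk d \<phi> h n \<omega> i c) \<in> borel_measurable M"
    and deviation: "\<And>i c. i < N \<Longrightarrow> c \<in> ballR d R \<Longrightarrow>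
      prob {\<omega> \<in> space M. \<epsilon> \<le> \<bar>hemp Xk Yk d \<phi> h n \<omega> i c - hbar M X Y d \<phi> h i c\<bar>} \<le> p"
  shows "prob {\<omega> \<in> space M. \<not> (A \<inter> AAeps M X Y N d R \<phi> h (- \<epsilon>) \<subseteq> A \<inter> Aomega Xk Yk N d R \<phi> h n \<omega>
                         \<and> A \<inter> Aomega Xk Yk N d R \<phi> h n \<omega> \<subseteq> A \<inter> AAeps M X Y N d R \<phi> h \<epsilon>)}
           \<le> real N * real (card A) * p"
proof -
  have a_ballR: "a i \<in> ballR d R" if "a \<in> A" "i < N" for a i
    using A that unfolding ballRN_def by blast
  have "prob {\<omega> \<in> space M. \<not> (A \<inter> AAeps M X Y N d R \<phi> h (- \<epsilon>) \<subseteq> A \<inter> Aomega Xk Yk N d R \<phi> h n \<omega>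
                         \<and> A \<inter> Aomega Xk Yk N d R \<phi> h n \<omega> \<subseteq> A \<inter> AAeps M X Y N d R \<phi> h \<epsilon>)}
          \<le> real (card (A \<times> {..<N})) * p"
    by (rule prob_le_card_mult_of_cover[OF _ sandwich_failure_subset_deviations[OF A]])
      (use \<open>finite A\<close> hemp_meas deviation a_ballR in auto)
  then show ?thesis
    by (simp add: card_cartesian_product mult_ac)
qed

theorem lemma2:
  fixes M :: "'w measure"
    and N d :: nat and R :: real
    and Xs :: "'x::euclidean_space set" and Ys :: "'y::euclidean_space set"
    and X :: "'w \<Rightarrow> 'x" and Y :: "'w \<Rightarrow> 'y"
    and Xk :: "nat \<Rightarrow> 'w \<Rightarrow> 'x" and Yk :: "nat \<Rightarrow> 'w \<Rightarrow> 'y"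
    and \<phi> :: "nat \<Rightarrow> 'x \<Rightarrow> real"
    and J dJ :: "nat \<Rightarrow> 'y \<Rightarrow> (nat \<Rightarrow> real) \<Rightarrow> real"
    and h :: "nat \<Rightarrow> real \<Rightarrow> 'y \<Rightarrow> real"
    and LF Lh Mh \<epsilon>h \<epsilon>d :: real
    and A :: "(nat \<Rightarrow> nat \<Rightarrow> real) set"
    and \<epsilon> :: real and n :: nat
  assumes P: "prob_space M"
    and N_pos: "N > 0" and d_pos: "d > 0" and R_pos: "R > 0"
    and cpt: "compact Xs" "compact Ys"
    and X_meas: "X \<in> borel_measurable M" and Y_meas: "Y \<in> borel_measurable M"
    and XY_range: "\<forall>\<omega>\<in>space M. X \<omega> \<in> Xs \<and> Y \<omega> \<in> Ys"
    and phi_cont: "\<forall>l<d. continuous_on Xs (\<phi> l)"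
    and iid_indep: "prob_space.indep_vars M (\<lambda>_. borel) (\<lambda>k \<omega>. (Xk k \<omega>, Yk k \<omega>)) {1..}"
    and iid_distr: "\<forall>k\<ge>1. distr M borel (\<lambda>\<omega>. (Xk k \<omega>, Yk k \<omega>)) = distr M borel (\<lambda>\<omega>. (X \<omega>, Y \<omega>))"
    and XYk_range: "\<forall>k\<ge>1. \<forall>\<omega>\<in>space M. Xk k \<omega> \<in> Xs \<and> Yk k \<omega> \<in> Ys"
    and h_meas: "\<forall>i<N. \<forall>c\<in>ballR d R.
        (\<lambda>p. h i (zhat d \<phi> c (fst p)) (snd p)) \<in> borel_measurable borel"
    and F_meas: "\<forall>a\<in>ballRN N d R. \<forall>i<N. \<forall>l<d.
        (\<lambda>p. dJ i (snd p) (zhatN N d \<phi> a (fst p)) * \<phi> l (fst p)) \<in> borel_measurable borel"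
    \<comment> \<open>(A1): dJ i y z is the derivative of J^i in z^i, continuous\<close>
    and A1: "\<forall>i<N. \<forall>y\<in>Ys. \<forall>z\<in>ZhatN N d R \<phi> Xs.
        (\<forall>t. ((\<lambda>s. J i y (z(i := s))) has_real_derivative dJ i y (z(i := t))) (at t))
        \<and> continuous_on UNIV (\<lambda>t. dJ i y (z(i := t)))"
    \<comment> \<open>(A2)\<close>
    and A2_F: "\<forall>y\<in>Ys. \<forall>z\<in>ZhatN N d R \<phi> Xs. \<forall>z'\<in>ZhatN N d R \<phi> Xs.
        L2_set (\<lambda>i. dJ i y z - dJ i y z') {..<N} \<le> LF * L2_set (\<lambda>i. z i - z' i) {..<N}"
    and A2_h: "\<forall>y\<in>Ys. \<forall>i<N. \<forall>s\<in>Zhat_i d R \<phi> Xs. \<forall>t\<in>Zhat_i d R \<phi> Xs.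
        \<bar>h i s y - h i t y\<bar> \<le> Lh * \<bar>s - t\<bar>"
    and A2_bdd: "\<exists>z\<in>ZhatN N d R \<phi> Xs.
        (\<exists>B. \<forall>y\<in>Ys. L2_set (\<lambda>i. dJ i y z) {..<N} \<le> B)
        \<and> (\<forall>i<N. \<exists>B. \<forall>y\<in>Ys. \<bar>h i (z i) y\<bar> \<le> B)"
    and Mh: "\<exists>c<Mh. \<forall>z\<in>ZhatN N d R \<phi> Xs. \<forall>y\<in>Ys. \<forall>i<N. \<bar>h i (z i) y\<bar> \<le> c"
    \<comment> \<open>(A4)\<close>
    and A4: "\<epsilon>h > 0" "\<forall>i<N. \<exists>c\<in>ballR d R. hbar M X Y d \<phi> h i c \<le> - \<epsilon>h"
    \<comment> \<open>the constant epsilon_diamond\<close>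
    and ed: "0 < \<epsilon>d" "\<epsilon>d < \<epsilon>h"
    and ed_F: "\<forall>a\<in>ballRN N d R. \<forall>i<N. \<forall>l<d.
        rate_cond M \<epsilon>d (\<lambda>\<omega>. dJ i (Y \<omega>) (zhatN N d \<phi> a (X \<omega>)) * \<phi> l (X \<omega>)
          - (\<integral>\<omega>'. dJ i (Y \<omega>') (zhatN N d \<phi> a (X \<omega>')) * \<phi> l (X \<omega>') \<partial>M))"
    and ed_h: "\<forall>a\<in>ballRN N d R. \<forall>i<N.
        rate_cond M \<epsilon>d (\<lambda>\<omega>. h i (zhat d \<phi> (a i) (X \<omega>)) (Y \<omega>) - hbar M X Y d \<phi> h i (a i))"
    \<comment> \<open>the finite set of profiles and the parameters\<close>
    and A_fin: "finite A" and A_sub: "A \<subseteq> ballRN N d R"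
    and eps: "0 < \<epsilon>" "\<epsilon> \<le> \<epsilon>d"
    and n_pos: "n \<ge> 1"
  shows "{\<omega> \<in> space M. \<not> (A \<inter> AAeps M X Y N d R \<phi> h (- \<epsilon>) \<subseteq> A \<inter> Aomega Xk Yk N d R \<phi> h n \<omega>
                          \<and> A \<inter> Aomega Xk Yk N d R \<phi> h n \<omega> \<subseteq> A \<inter> AAeps M X Y N d R \<phi> h \<epsilon>)} \<in> sets M
     \<and> measure M {\<omega> \<in> space M. \<not> (A \<inter> AAeps M X Y N d R \<phi> h (- \<epsilon>) \<subseteq> A \<inter> Aomega Xk Yk N d R \<phi> h n \<omega>
                          \<and> A \<inter> Aomega Xk Yk N d R \<phi> h n \<omega> \<subseteq> A \<inter> AAeps M X Y N d R \<phi> h \<epsilon>)}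
       \<le> 2 * real N * real (card A) * exp (- (\<epsilon>\<^sup>2 * real n) / (3 * Mh\<^sup>2))"
proof -
  interpret prob_space M by (rule P)
  obtain C where "C < Mh" and C: "\<forall>z\<in>ZhatN N d R \<phi> Xs. \<forall>y\<in>Ys. \<forall>i<N. \<bar>h i (z i) y\<bar> \<le> C"
    using Mh by blast
  have XY: "(\<lambda>\<omega>. (X \<omega>, Y \<omega>)) \<in> borel_measurable M"
    using X_meas Y_meas by measurable
  have hemp_meas: "(\<lambda>\<omega>. hemp Xk Yk d \<phi> h n \<omega> i c) \<in> borel_measurable M"
    if "i < N" "c \<in> ballR d R" for i c
    using iid_indep h_meas that unfolding indep_vars_def by (intro hemp_measurable) auto
  have deviation: "prob {\<omega> \<in> space M. \<epsilon> \<le> \<bar>hemp Xk Yk d \<phi> h n \<omega> i c - hbar M X Y d \<phi> h i c\<bar>}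
      \<le> 2 * exp (- (\<epsilon>\<^sup>2 * real n) / (3 * Mh\<^sup>2))" if "i < N" "c \<in> ballR d R" for i c
  proof -
    have "\<forall>\<omega>\<in>space M. \<bar>h i (zhat d \<phi> c (X \<omega>)) (Y \<omega>)\<bar> \<le> Mh"
      using h_abs_le_on_ballR[OF C \<open>c \<in> ballR d R\<close> _ _ \<open>i < N\<close>] XY_range \<open>C < Mh\<close> by force
    then have "prob {\<omega> \<in> space M. \<epsilon> \<le> \<bar>hemp Xk Yk d \<phi> h n \<omega> i c - hbar M X Y d \<phi> h i c\<bar>}
        \<le> 2 * exp (- (\<epsilon>\<^sup>2 * real n) / (2 * Mh\<^sup>2))"
      using eps(1) n_pos
      by (intro hemp_abs_deviation_Hoeffding[of Xk Yk X Y h i d \<phi> c, OF iid_indep iid_distr XY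
          h_meas[rule_format, OF that]])
    also have "\<dots> \<le> 2 * exp (- (\<epsilon>\<^sup>2 * real n) / (3 * Mh\<^sup>2))"
      by (cases "Mh = 0") (simp_all add: frac_le)
    finally show ?thesis .
  qed
  show ?thesis
    using sets_sandwich_failure[OF A_fin A_sub hemp_meas] prob_sandwich_failure_le[OF A_fin A_sub hemp_meas deviation]
    by (simp add: mult_ac)
qed

end
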